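(* Let $(z,y)\in D'\times D$ satisfy the paraxial approximation, i.e. for $0<\eta\ll 1$, \[ y=\left( \eta^{\frac{1}{2}} y^\perp,y^\parallel \right)\in D, \qquad z=\left(\eta^{\frac{1}{2}} z^\perp,z^\parallel \right)\in D'. \] In the paraxial regime in dimension $3$ the point spread function has the expression \begin{multline*} F^{c}(z,y) = \eta^{-1} \left(\frac{c}{c^\star}\right)^2 \frac{\ell_0^4}{\left(16\pi^2|z||\varphi_c(y)| \right)^2} \int_{\mathcal{B}_0}\omega^2 e^{i\frac{2\omega}{\eta c}\left( |z| - |\varphi_c(y)| \right)} e^{i\frac{\omega}{c}\left(1-\left(\frac{c^\star}{c}\right)^2\right) \frac{\vert \varphi_c(y)^\perp\vert^2}{\vert \varphi_c(y)\vert}} \\ \mathcal{G}^2\left(\frac{\omega\ell_0}{c}\left( \frac{z^\perp}{|z|}- \frac{\varphi_c(y)^\perp}{|\varphi_c(y)|}\right) , \frac{\omega\ell_0^2}{c}\left( \frac{1}{|z|} - \left(\frac{c}{c^\star}\right)^2\frac{1}{|\varphi_c(y)|}\right)\right)\mathrm{d} \omega+ \mathcal{O}(1), \end{multline*} or equivalently \begin{multline*} F^{c}(z,y) = \eta^{-1} \left(\frac{c^\star}{c}\right)^2 \frac{\ell_0^4}{\left(16\pi^2|y||\varphi_c^{-1}(z)| \right)^2} \int_{\mathcal{B}_0}\omega^2 e^{i\frac{2\omega}{\eta c^\star}\left( |\varphi_c^{-1}(z)| - |y| \right)} e^{i\frac{\omega}{c^\star}\left(\left(\frac{c}{c^\star}\right)^2-1\right)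 \frac{\vert \varphi_c^{-1}(z)^\perp\vert^2}{\vert \varphi^{-1}_c(z)\vert}} \\ \mathcal{G}^2\left(\frac{\omega\ell_0}{c^\star}\left( \frac{\varphi_c^{-1}(z)^\perp}{|\varphi_c^{-1}(z)|}- \frac{y^\perp}{|y|}\right) , \frac{\omega\ell_0^2}{c^\star}\left( \left(\frac{c^\star}{c}\right)^2 \frac{1}{|\varphi_c^{-1}(z)|} - \frac{1}{|y|}\right)\right)\mathrm{d} \omega + \mathcal{O}(1), \end{multline*} where \[ \mathcal{G}(\xi_1,\xi_2) := \int_{[-1,1]^2} e^{-i x_e^\perp \cdot \xi_1 + i \frac{\left\vert x_e^\perp\right\vert^2}{2} \xi_2} \,\mathrm{d} x_e^\perp, \qquad \xi_1 \in \mathbb{R}^2,\ \xi_2\in \mathbb{R}, \] and \[ \varphi_c: D \to D',\qquad \varphi_c(y):= \left(\eta^\frac{1}{2} \left( \frac{c}{c^\star}\right)^2y^\perp, \frac{c}{c^\star} y^\parallel\right). \]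
   Context: Setting: a medium $D\subset\mathbb{R}^d$ (here $d=3$) with random micro-structured index $n_\varepsilon(x)=n(x/\varepsilon)$ whose homogenized (effective) index equals the background index $n^\star$; effective speed of sound $c^\star=1/\sqrt{n^\star}$, and the homogenized Green function is $G^\star=\Gamma^{\omega/c^\star}$, where $\Gamma^k$ is the outgoing free-space Helmholtz Green function with wavenumber $k$. A linear probe $\mathcal{P}=[-\ell,\ell]^{d-1}\times\{0\}$ records the measurements $M(x_e,x_r,\omega)=\omega^2\int_D (n_\varepsilon(y)-n^\star)G^\star(x_r,y)G^\star(x_e,y)\,\mathrm{d}y$ for $\omega$ in the band $\mathcal{B}$. The imaging function with backpropagation speed $c$ is $I^c(z)=\int_{\mathcal{P}\times\mathcal{P}\times\mathcal{B}}\overline{M(x_e,x_r,\omega)}\Gamma^{\omega/c}(z,x_e)\Gamma^{\omega/c}(z,x_r)\,\mathrm{d}x_e\mathrm{d}x_r\mathrm{d}\omega$ for $z$ in the virtual image domain $D'$; it equals $\int_D(n_\varepsilon(y)-n^\star)F^c(z,y)\,\mathrm{d}y$ with point spread function $F^c(z,y)=\int_{\mathcal{B}}\omega^2\left(\int_{\mathcal{P}}\Gamma^{\omega/c}(z,x_r)\overline{G^\star(y,x_r)}\,\mathrm{d}x_r\right)^2\mathrm{d}\omega$. Paraxial scaling with small parameter $\eta$: central frequency $\omega_c=\omega_0/\eta$, bandwidth $\mathcal{B}=\mathcal{B}_0/\eta$ (frequencies rescaled to the band $\mathcal{B}_0$), probe half-length $\ell=\eta^{1/2}\ell_0$, $\mathcal{P}=\eta^{1/2}\mathcal{P}_0$,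 $\varepsilon=\eta^\alpha$, $\alpha>0$. For a point $y$, $y^\perp\in\mathbb{R}^{d-1}$ denotes the transverse coordinate rescaled by $\eta^{-1/2}$ and $y^\parallel\ge 0$ denotes the axial (depth) coordinate. *)

theory Defs
  imports "HOL-Analysis.Analysis" "HOL-Library.Landau_Symbols"
begin

text \<open>Points of R^3 are represented as pairs (transverse part in R^2, axial/depth part).
  The product norm on real^2 \<times> real is the Euclidean norm of R^3.\<close>
type_synonym pt3 = "(real^2) \<times> real"

definition Gamma3 :: "real \<Rightarrow> pt3 \<Rightarrow> pt3 \<Rightarrow> complex" where
  "Gamma3 k x y = cis (k * dist x y) / complex_of_real (4 * pi * dist x y)"

definition sq2 :: "real \<Rightarrow> (real^2) set" where
  "sq2 a = cbox (\<chi> i. - a) (\<chi> i. a)"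

text \<open>Point spread function F^c(z,y) for backpropagation speed c, effective speed cs (= c*),
  probe P = [-l,l]^2 \<times> {0} and frequency band B.\<close>
definition psf :: "real \<Rightarrow> real \<Rightarrow> real \<Rightarrow> real set \<Rightarrow> pt3 \<Rightarrow> pt3 \<Rightarrow> complex" where
  "psf c cs l B z y =
     integral B (\<lambda>\<omega>. complex_of_real (\<omega>^2) *
       (integral (sq2 l) (\<lambda>xr. Gamma3 (\<omega> / c) z (xr, 0) * cnj (Gamma3 (\<omega> / cs) y (xr, 0))))^2)"

definition GG :: "real^2 \<Rightarrow> real \<Rightarrow> complex" where
  "GG \<xi>1 \<xi>2 = integral (sq2 1) (\<lambda>u. cis (- (u \<bullet> \<xi>1) + (norm u)^2 / 2 * \<xi>2))"

text \<open>Paraxially scaled point: actual point with rescaled transverse coordinate xp, depth xa.\<close>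
definition parax :: "real \<Rightarrow> real^2 \<Rightarrow> real \<Rightarrow> pt3" where
  "parax \<eta> xp xa = (sqrt \<eta> *\<^sub>R xp, xa)"

definition perp :: "real \<Rightarrow> pt3 \<Rightarrow> real^2" where
  "perp \<eta> x = (1 / sqrt \<eta>) *\<^sub>R fst x"

text \<open>\<phi>_c on actual points: (\<eta>^(1/2) y^\<perp>, y^\<parallel>) \<mapsto> (\<eta>^(1/2) (c/c*)^2 y^\<perp>, (c/c*) y^\<parallel>).\<close>
definition phi :: "real \<Rightarrow> real \<Rightarrow> pt3 \<Rightarrow> pt3" where
  "phi c cs y = ((c / cs)^2 *\<^sub>R fst y, (c / cs) * snd y)"

definition phi_inv :: "real \<Rightarrow> real \<Rightarrow> pt3 \<Rightarrow> pt3" where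
  "phi_inv c cs z = ((cs / c)^2 *\<^sub>R fst z, (cs / c) * snd z)"

definition lead1 :: "real \<Rightarrow> real \<Rightarrow> real \<Rightarrow> real set \<Rightarrow> real \<Rightarrow> pt3 \<Rightarrow> pt3 \<Rightarrow> complex" where
  "lead1 c cs l0 B0 \<eta> z y =
    (let p = phi c cs y; np = norm p; nz = norm z in
     complex_of_real (inverse \<eta> * (c / cs)^2 * l0^4 / (16 * pi^2 * nz * np)^2) *
     integral B0 (\<lambda>\<omega>. complex_of_real (\<omega>^2) *
        cis (2 * \<omega> / (\<eta> * c) * (nz - np)) *
        cis (\<omega> / c * (1 - (cs / c)^2) * (norm (perp \<eta> p))^2 / np) *
        (GG ((\<omega> * l0 / c) *\<^sub>R ((1 / nz) *\<^sub>R perp \<eta> z - (1 / np) *\<^sub>R perp \<eta> p))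
            (\<omega> * l0^2 / c * (1 / nz - (c / cs)^2 * (1 / np))))^2))"

definition lead2 :: "real \<Rightarrow> real \<Rightarrow> real \<Rightarrow> real set \<Rightarrow> real \<Rightarrow> pt3 \<Rightarrow> pt3 \<Rightarrow> complex" where
  "lead2 c cs l0 B0 \<eta> z y =
    (let q = phi_inv c cs z; nq = norm q; ny = norm y in
     complex_of_real (inverse \<eta> * (cs / c)^2 * l0^4 / (16 * pi^2 * ny * nq)^2) *
     integral B0 (\<lambda>\<omega>. complex_of_real (\<omega>^2) *
        cis (2 * \<omega> / (\<eta> * cs) * (nq - ny)) *
        cis (\<omega> / cs * ((c / cs)^2 - 1) * (norm (perp \<eta> q))^2 / nq) *
        (GG ((\<omega> * l0 / cs) *\<^sub>R ((1 / nq) *\<^sub>R perp \<eta> q - (1 / ny) *\<^sub>R perp \<eta> y))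
            (\<omega> * l0^2 / cs * ((cs / c)^2 * (1 / nq) - 1 / ny)))^2))"

end

(*
  After the substitutions omega = w / eta for the frequency and x = sqrt eta * l0 * u for the
  probe point, the point spread function and the leading-order expression lead1 both take the
  form  l0^4 / (eta (16 pi^2)^2) * Int_{B0} w^2 (Int_{[-1,1]^2} A(w,u) e^(i Theta(w,u)) du)^2 dw.
  Their difference is therefore O(1) once the amplitudes and the phases agree up to O(eta),
  uniformly in (w, u).  A second-order Taylor expansion of the square roots shows that the exact
  phase (w/eta) (|z - x|/c - |y - x|/c_star) and the phase of lead1 are both O(eta)-close to the same
  Fresnel phase: their 1/eta parts coincide exactly, and their O(1) parts are the same quadratic
  polynomial in u.  Both amplitudes tend to 1/(z_par y_par).
  The second expression lead2 is the complex conjugate of lead1 with the roles of (c, z) and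
  (c_star, y) exchanged, and so is the point spread function; the second estimate is therefore the
  first one for the exchanged configuration.
*)
theory Submission
  imports Defs
begin

lemma sqrt_add_bounds:
  fixes p t :: real
  assumes "p > 0" "t \<ge> 0"
  shows "p \<le> sqrt (p^2 + t)" "sqrt (p^2 + t) \<le> p + t / (2*p)"
proof -
  show "p \<le> sqrt (p^2 + t)" using assms by (simp add: real_le_rsqrt)
  have "p^2 + t \<le> (p + t / (2*p))^2" using assms by (simp add: power2_eq_square field_simps)
  then show "sqrt (p^2 + t) \<le> p + t / (2*p)"
    using assms by (intro real_le_lsqrt) auto
qed

lemma abs_sqrt_add_taylor2_le:
  fixes p t :: real
  assumes p: "p > 0" and t: "t \<ge> 0"
  shows "\<bar>sqrt (p^2 + t) - p - t / (2*p)\<bar> \<le> t^2 / (8 * p^3)"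
proof -
  define s where "s = sqrt (p^2 + t)"
  have "p \<le> s" unfolding s_def using sqrt_add_bounds[OF p t] by simp
  have "s^2 = p^2 + t" unfolding s_def using p t by simp
  then have sp: "s - p = t / (s + p)"
    using \<open>p \<le> s\<close> p by (simp add: field_simps power2_eq_square)
  have "t / (2*p) - (s - p) = t / (2*p) - t / (s + p)" by (simp only: sp)
  also have "\<dots> = t * (s - p) / (2*p*(s + p))"
    using \<open>p \<le> s\<close> p by (simp add: field_simps)
  also have "\<dots> = t^2 / (2*p*(s + p)^2)" by (simp add: sp power2_eq_square)
  finally have "t / (2*p) - (s - p) = t^2 / (2*p*(s + p)^2)" .
  moreover have "t^2 / (2*p*(s + p)^2) \<le> t^2 / (8 * p^3)"
  proof (rule divide_left_mono)
    have "2*p*(2*p)^2 \<le> 2*p*(s + p)^2"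
      using \<open>p \<le> s\<close> p by (intro mult_left_mono power_mono) auto
    then show "8 * p^3 \<le> 2*p*(s + p)^2" by (simp add: power2_eq_square power3_eq_cube)
  qed (use \<open>p \<le> s\<close> p in auto)
  moreover have "0 \<le> t^2 / (2*p*(s + p)^2)" using p by simp
  ultimately show ?thesis unfolding s_def[symmetric] by linarith
qed

lemma abs_inverse_sqrt_add_diff_le:
  fixes p t :: real
  assumes p: "p > 0" and t: "t \<ge> 0"
  shows "\<bar>1 / sqrt (p^2 + t) - 1 / p\<bar> \<le> t / (2 * p^3)"
proof -
  define s where "s = sqrt (p^2 + t)"
  have s: "p \<le> s" "s \<le> p + t / (2*p)" using sqrt_add_bounds[OF p t] unfolding s_def by auto
  have "\<bar>1 / s - 1 / p\<bar> = (s - p) / (p * s)" using s p by (simp add: field_simps)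
  also have "\<dots> \<le> (t / (2*p)) / (p * p)"
    using s p by (intro frac_le mult_left_mono) auto
  also have "\<dots> = t / (2 * p^3)" by (simp add: power3_eq_cube)
  finally show ?thesis unfolding s_def .
qed

lemma power2_norm_diff_scaleR:
  fixes v u :: "'a::real_inner"
  shows "(norm (v - l *\<^sub>R u))^2 = (norm v)^2 - 2 * l * (u \<bullet> v) + l^2 * (norm u)^2"
  unfolding power2_norm_eq_inner by (simp add: inner_diff_left inner_diff_right inner_commute power2_eq_square algebra_simps)

lemma norm_cis_minus_one_le: "cmod (cis t - 1) \<le> \<bar>t\<bar>"
proof -
  have "(cmod (cis t - 1))^2 = (cos t - 1)^2 + (sin t)^2"
    by (simp add: cmod_power2)
  also have "\<dots> = 4 * (sin (t/2))^2"
    using sin_cos_squared_add[of t] cos_double_sin[of "t/2"] by (simp add: power2_eq_square algebra_simps)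
  also have "\<dots> \<le> 4 * (t/2)^2"
    using power_mono[OF abs_sin_x_le_abs_x[of "t/2"] abs_ge_zero, of 2] by (simp add: power_divide)
  also have "\<dots> = \<bar>t\<bar>^2" by (simp add: power2_eq_square)
  finally show ?thesis by (rule power2_le_imp_le) simp
qed

lemma norm_cis_diff_le: "cmod (cis x - cis y) \<le> \<bar>x - y\<bar>"
proof -
  have "cis y * cis (x - y) = cis x" by (simp add: cis_mult)
  then have "cis x - cis y = cis y * (cis (x - y) - 1)" by (simp add: algebra_simps)
  then show ?thesis using norm_cis_minus_one_le[of "x - y"] by (simp add: norm_mult)
qed

lemma norm_amp_cis_diff_le:
  fixes a1 a2 t1 t2 :: real
  shows "cmod (of_real a1 * cis t1 - of_real a2 * cis t2) \<le> \<bar>a1 - a2\<bar> + \<bar>a2\<bar> * \<bar>t1 - t2\<bar>"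
proof -
  have "of_real a1 * cis t1 - of_real a2 * cis t2 = of_real (a1 - a2) * cis t1 + of_real a2 * (cis t1 - cis t2)"
    by (simp add: algebra_simps)
  also have "cmod \<dots> \<le> \<bar>a1 - a2\<bar> + \<bar>a2\<bar> * cmod (cis t1 - cis t2)"
    using norm_triangle_ineq[of "of_real (a1 - a2) * cis t1" "of_real a2 * (cis t1 - cis t2)"]
    by (simp add: norm_mult del: of_real_diff)
  also have "\<dots> \<le> \<bar>a1 - a2\<bar> + \<bar>a2\<bar> * \<bar>t1 - t2\<bar>"
    using norm_cis_diff_le by (simp add: mult_left_mono)
  finally show ?thesis .
qed

lemma bigo_cnj_iff: "(\<lambda>x. cnj (f x)) \<in> O[F](g) \<longleftrightarrow> f \<in> O[F](g)"
proof -
  have "(\<lambda>x. cnj (f x)) \<in> O[F](g) \<longleftrightarrow> (\<lambda>x. norm (cnj (f x))) \<in> O[F](\<lambda>x. norm (g x))"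
    by (rule landau_o.big.norm_iff[symmetric])
  also have "\<dots> \<longleftrightarrow> f \<in> O[F](g)"
    unfolding complex_mod_cnj by (rule landau_o.big.norm_iff)
  finally show ?thesis .
qed

lemma HK_integral_cnj: "integral S (\<lambda>x. cnj (f x)) = cnj (integral S f)"
proof (cases "f integrable_on S")
  case True
  then show ?thesis using integral_linear[OF True bounded_linear_cnj] by (simp add: o_def)
next
  case False
  then have "\<not> (\<lambda>x. cnj (f x)) integrable_on S"
    using integrable_linear[OF _ bounded_linear_cnj, of "\<lambda>x. cnj (f x)" S] by (auto simp: o_def)
  then show ?thesis using False by (simp add: not_integrable_integral)
qed

lemma integral_cbox_scaleR:
  fixes f :: "'a::euclidean_space \<Rightarrow> 'b::real_normed_vector"
  assumes m: "m > 0"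
  shows "integral (cbox (a /\<^sub>R m) (b /\<^sub>R m)) (\<lambda>x. f (m *\<^sub>R x)) = integral (cbox a b) f /\<^sub>R m ^ DIM('a)"
proof -
  have iff: "((\<lambda>x. f (m *\<^sub>R x)) has_integral I /\<^sub>R m ^ DIM('a)) (cbox (a /\<^sub>R m) (b /\<^sub>R m))
      \<longleftrightarrow> (f has_integral I) (cbox a b)" for I
    using has_integral_affinity_iff[OF m, of f 0 I a b] by simp
  show ?thesis
  proof (cases "f integrable_on cbox a b")
    case True
    then show ?thesis using iff by blast
  next
    case False
    have "\<not> (\<lambda>x. f (m *\<^sub>R x)) integrable_on cbox (a /\<^sub>R m) (b /\<^sub>R m)"
    proof
      assume "(\<lambda>x. f (m *\<^sub>R x)) integrable_on cbox (a /\<^sub>R m) (b /\<^sub>R m)"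
      then obtain J where "((\<lambda>x. f (m *\<^sub>R x)) has_integral (m ^ DIM('a) *\<^sub>R J) /\<^sub>R m ^ DIM('a))
          (cbox (a /\<^sub>R m) (b /\<^sub>R m))"
        using m by auto
      with iff False show False by blast
    qed
    with False show ?thesis by (simp add: not_integrable_integral)
  qed
qed

lemma integral_sq2_scaleR:
  fixes F :: "real^2 \<Rightarrow> 'b::real_normed_vector"
  assumes "m > 0"
  shows "integral (sq2 m) F = m^2 *\<^sub>R integral (sq2 1) (\<lambda>u. F (m *\<^sub>R u))"
proof -
  have "(\<chi> i. - m) /\<^sub>R m = ((\<chi> i. - 1) :: real^2)" "(\<chi> i. m) /\<^sub>R m = ((\<chi> i. 1) :: real^2)"
    using assms by (auto simp: vec_eq_iff)
  then show ?thesis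
    using integral_cbox_scaleR[OF assms, where f=F and a="\<chi> i. - m" and b="\<chi> i. m"] assms unfolding sq2_def by simp
qed

lemma integral_atLeastAtMost_divide:
  fixes G :: "real \<Rightarrow> 'b::real_normed_vector"
  assumes "\<eta> > 0"
  shows "integral {a / \<eta>..b / \<eta>} G = (1 / \<eta>) *\<^sub>R integral {a..b} (\<lambda>w. G (w / \<eta>))"
  using integral_stretch_real[of \<eta> a b "\<lambda>w. G (w / \<eta>)"] assms by simp

lemma zero_in_sq2: "0 \<in> sq2 1"
  unfolding sq2_def by (simp add: mem_box_cart)

lemma norm_integral_sq2_le:
  fixes f :: "real^2 \<Rightarrow> 'a::real_normed_vector"
  assumes f: "f integrable_on sq2 1" and B: "\<And>u. u \<in> sq2 1 \<Longrightarrow> norm (f u) \<le> B"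
  shows "norm (integral (sq2 1) f) \<le> 4 * B"
proof -
  have "0 \<le> B" "sq2 (1::real) \<noteq> {}" using zero_in_sq2 norm_ge_zero[of "f 0"] B[OF zero_in_sq2] by (linarith, blast)
  then have "Henstock_Kurzweil_Integration.content (sq2 1) = 4"
    unfolding sq2_def by (simp add: content_cbox_cart)
  moreover have "norm (integral (sq2 1) f) \<le> B * Henstock_Kurzweil_Integration.content (sq2 1)"
    unfolding sq2_def
    by (rule has_integral_bound[OF \<open>0 \<le> B\<close> integrable_integral[OF f[unfolded sq2_def]] B[unfolded sq2_def]])
  ultimately show ?thesis by (simp add: mult.commute)
qed

definition amp_phase_integral :: "real \<Rightarrow> real \<Rightarrow> (real \<times> (real^2) \<Rightarrow> real) \<Rightarrow> (real \<times> (real^2) \<Rightarrow> real) \<Rightarrow> complex" where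
  "amp_phase_integral a b A \<Theta> =
     integral {a..b} (\<lambda>w. of_real (w^2) * (integral (sq2 1) (\<lambda>u. of_real (A (w, u)) * cis (\<Theta> (w, u))))^2)"

lemma continuous_on_amp_phase:
  assumes "continuous_on ({a..b} \<times> sq2 1) A" "continuous_on ({a..b} \<times> sq2 1) \<Theta>"
  shows "continuous_on ({a..b} \<times> sq2 1) (\<lambda>(w, u). of_real (A (w, u)) * cis (\<Theta> (w, u)))"
  using assms by (simp add: case_prod_beta' continuous_intros)

lemma integrable_amp_phase_inner:
  assumes "continuous_on ({a..b} \<times> sq2 1) A" "continuous_on ({a..b} \<times> sq2 1) \<Theta>" "w \<in> {a..b}"
  shows "(\<lambda>u. of_real (A (w, u)) * cis (\<Theta> (w, u))) integrable_on sq2 1"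
proof -
  have "continuous_on (sq2 1) (\<lambda>u. (w, u))" by (intro continuous_intros)
  moreover have "(\<lambda>u. (w, u)) ` sq2 1 \<subseteq> {a..b} \<times> sq2 1" using assms(3) by auto
  ultimately have "continuous_on (sq2 1) (\<lambda>u. of_real (A (w, u)) * cis (\<Theta> (w, u)))"
    using continuous_on_compose2[OF continuous_on_amp_phase[OF assms(1,2)]] by simp
  then show ?thesis unfolding sq2_def by (rule integrable_continuous)
qed

lemma continuous_on_amp_phase_inner:
  assumes "continuous_on ({a..b} \<times> sq2 1) A" "continuous_on ({a..b} \<times> sq2 1) \<Theta>"
  shows "continuous_on {a..b} (\<lambda>w. integral (sq2 1) (\<lambda>u. of_real (A (w, u)) * cis (\<Theta> (w, u))))"
  using continuous_on_amp_phase[OF assms] unfolding sq2_def by (rule integral_continuous_on_param)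

lemma norm_square_amp_phase_diff_le:
  assumes int1: "(\<lambda>u. of_real (A1 u) * cis (\<Theta>1 u)) integrable_on sq2 1"
    and int2: "(\<lambda>u. of_real (A2 u) * cis (\<Theta>2 u)) integrable_on sq2 1"
    and bounds: "\<And>u. u \<in> sq2 1 \<Longrightarrow>
      \<bar>A1 u - A2 u\<bar> \<le> \<delta>A \<and> \<bar>\<Theta>1 u - \<Theta>2 u\<bar> \<le> \<delta>\<Theta> \<and> \<bar>A1 u\<bar> \<le> M \<and> \<bar>A2 u\<bar> \<le> M"
  shows "norm ((integral (sq2 1) (\<lambda>u. of_real (A1 u) * cis (\<Theta>1 u)))^2
      - (integral (sq2 1) (\<lambda>u. of_real (A2 u) * cis (\<Theta>2 u)))^2) \<le> 4 * (\<delta>A + M * \<delta>\<Theta>) * (8 * M)"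
proof -
  define J1 where "J1 = integral (sq2 1) (\<lambda>u. of_real (A1 u) * cis (\<Theta>1 u))"
  define J2 where "J2 = integral (sq2 1) (\<lambda>u. of_real (A2 u) * cis (\<Theta>2 u))"
  have "0 \<le> M" using bounds[OF zero_in_sq2] by linarith
  have "norm (of_real (A1 u) * cis (\<Theta>1 u) - of_real (A2 u) * cis (\<Theta>2 u)) \<le> \<delta>A + M * \<delta>\<Theta>"
    if "u \<in> sq2 1" for u
  proof -
    have "norm (of_real (A1 u) * cis (\<Theta>1 u) - of_real (A2 u) * cis (\<Theta>2 u))
        \<le> \<bar>A1 u - A2 u\<bar> + \<bar>A2 u\<bar> * \<bar>\<Theta>1 u - \<Theta>2 u\<bar>"
      by (rule norm_amp_cis_diff_le)
    also have "\<dots> \<le> \<delta>A + M * \<delta>\<Theta>"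
      using bounds[OF that] \<open>0 \<le> M\<close> by (intro add_mono mult_mono) auto
    finally show ?thesis .
  qed
  then have diff_le: "norm (J1 - J2) \<le> 4 * (\<delta>A + M * \<delta>\<Theta>)"
    unfolding J1_def J2_def integral_diff[OF int1 int2, symmetric]
    by (intro norm_integral_sq2_le integrable_diff int1 int2)
  have "norm (of_real (A1 u) * cis (\<Theta>1 u)) \<le> M" "norm (of_real (A2 u) * cis (\<Theta>2 u)) \<le> M"
    if "u \<in> sq2 1" for u
    using bounds[OF that] by (simp_all add: norm_mult)
  then have "norm J1 \<le> 4 * M" "norm J2 \<le> 4 * M"
    unfolding J1_def J2_def using norm_integral_sq2_le int1 int2 by blast+
  then have sum_le: "norm (J1 + J2) \<le> 8 * M" using norm_triangle_ineq[of J1 J2] by simp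
  have "0 \<le> 4 * (\<delta>A + M * \<delta>\<Theta>)" using diff_le norm_ge_zero[of "J1 - J2"] by linarith
  then have "norm (J1 - J2) * norm (J1 + J2) \<le> 4 * (\<delta>A + M * \<delta>\<Theta>) * (8 * M)"
    by (rule mult_mono[OF diff_le sum_le _ norm_ge_zero])
  moreover have "J1^2 - J2^2 = (J1 - J2) * (J1 + J2)" by (simp add: algebra_simps power2_eq_square)
  ultimately show ?thesis unfolding J1_def J2_def by (simp add: norm_mult)
qed

lemma norm_amp_phase_integral_diff_le:
  assumes ab: "0 \<le> a" "a \<le> b"
    and cont: "continuous_on ({a..b} \<times> sq2 1) A1" "continuous_on ({a..b} \<times> sq2 1) \<Theta>1"
      "continuous_on ({a..b} \<times> sq2 1) A2" "continuous_on ({a..b} \<times> sq2 1) \<Theta>2"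
    and bounds: "\<And>q. q \<in> {a..b} \<times> sq2 1 \<Longrightarrow>
      \<bar>A1 q - A2 q\<bar> \<le> \<delta>A \<and> \<bar>\<Theta>1 q - \<Theta>2 q\<bar> \<le> \<delta>\<Theta> \<and> \<bar>A1 q\<bar> \<le> M \<and> \<bar>A2 q\<bar> \<le> M"
  shows "norm (amp_phase_integral a b A1 \<Theta>1 - amp_phase_integral a b A2 \<Theta>2)
    \<le> b^2 * (4 * (\<delta>A + M * \<delta>\<Theta>) * (8 * M)) * (b - a)"
proof -
  define J1 where "J1 w = integral (sq2 1) (\<lambda>u. of_real (A1 (w, u)) * cis (\<Theta>1 (w, u)))" for w
  define J2 where "J2 w = integral (sq2 1) (\<lambda>u. of_real (A2 (w, u)) * cis (\<Theta>2 (w, u)))" for w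
  have "continuous_on {a..b} J1" "continuous_on {a..b} J2"
    unfolding J1_def J2_def
    by (rule continuous_on_amp_phase_inner[OF cont(1,2)], rule continuous_on_amp_phase_inner[OF cont(3,4)])
  then have cont_J: "continuous_on {a..b} (\<lambda>w. of_real (w^2) * (J1 w)^2)"
      "continuous_on {a..b} (\<lambda>w. of_real (w^2) * (J2 w)^2)"
    by (auto intro!: continuous_intros)
  have "norm (of_real (w^2) * (J1 w)^2 - of_real (w^2) * (J2 w)^2)
      \<le> b^2 * (4 * (\<delta>A + M * \<delta>\<Theta>) * (8 * M))" if w: "w \<in> {a..b}" for w
  proof -
    have "norm ((J1 w)^2 - (J2 w)^2) \<le> 4 * (\<delta>A + M * \<delta>\<Theta>) * (8 * M)"
      unfolding J1_def J2_def using w cont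
      by (intro norm_square_amp_phase_diff_le integrable_amp_phase_inner bounds) auto
    moreover have "w^2 \<le> b^2" using w ab by (intro power_mono) auto
    ultimately show ?thesis
      unfolding right_diff_distrib[symmetric] norm_mult norm_of_real
      by (intro mult_mono) auto
  qed
  then have "norm (integral {a..b} (\<lambda>w. of_real (w^2) * (J1 w)^2 - of_real (w^2) * (J2 w)^2))
      \<le> b^2 * (4 * (\<delta>A + M * \<delta>\<Theta>) * (8 * M)) * (b - a)"
    using cont_J by (intro integral_bound ab(2) continuous_on_diff) auto
  then show ?thesis
    unfolding amp_phase_integral_def J1_def[symmetric] J2_def[symmetric]
    using cont_J by (simp add: integral_diff integrable_continuous_interval)
qed

lemma integral_GG_square_eq:
  "of_real (K * A^2) * integral B (\<lambda>\<omega>. of_real (\<omega>^2) * cis (P1 \<omega>) * cis (P2 \<omega>) * (GG (X1 \<omega>) (X2 \<omega>))^2)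
   = of_real K * integral B (\<lambda>\<omega>. of_real (\<omega>^2) *
       (integral (sq2 1) (\<lambda>u. of_real A * cis ((P1 \<omega> + P2 \<omega>) / 2 + (- (u \<bullet> X1 \<omega>) + (norm u)^2 / 2 * X2 \<omega>))))^2)"
proof -
  have "integral (sq2 1) (\<lambda>u. of_real A * cis ((P1 \<omega> + P2 \<omega>) / 2 + (- (u \<bullet> X1 \<omega>) + (norm u)^2 / 2 * X2 \<omega>)))
      = of_real A * cis ((P1 \<omega> + P2 \<omega>) / 2) * GG (X1 \<omega>) (X2 \<omega>)" for \<omega>
    unfolding GG_def integral_mult_right[symmetric] by (simp add: cis_mult[symmetric] mult.assoc)
  moreover have "cis ((P1 \<omega> + P2 \<omega>) / 2)^2 = cis (P1 \<omega>) * cis (P2 \<omega>)" for \<omega>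
    by (simp add: power2_eq_square cis_mult)
  ultimately show ?thesis
    by (simp add: power_mult_distrib mult_ac flip: integral_mult_right)
qed

section \<open>Bounds uniform in the paraxial parameter\<close>

definition unif_bigo :: "(real \<Rightarrow> 'p \<Rightarrow> real) \<Rightarrow> (real \<Rightarrow> real) \<Rightarrow> 'p set \<Rightarrow> bool" where
  "unif_bigo f g S \<longleftrightarrow> (\<exists>C. \<forall>\<eta> p. 0 < \<eta> \<longrightarrow> \<eta> \<le> 1 \<longrightarrow> p \<in> S \<longrightarrow> \<bar>f \<eta> p\<bar> \<le> C * g \<eta>)"

lemma unif_bigoI:
  "(\<And>\<eta> p. 0 < \<eta> \<Longrightarrow> \<eta> \<le> 1 \<Longrightarrow> p \<in> S \<Longrightarrow> \<bar>f \<eta> p\<bar> \<le> C * g \<eta>) \<Longrightarrow> unif_bigo f g S"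
  unfolding unif_bigo_def by blast

lemma unif_bigoE:
  assumes "unif_bigo f g S"
  obtains C where "\<And>\<eta> p. 0 < \<eta> \<Longrightarrow> \<eta> \<le> 1 \<Longrightarrow> p \<in> S \<Longrightarrow> \<bar>f \<eta> p\<bar> \<le> C * g \<eta>"
  using assms unfolding unif_bigo_def by blast

lemma unif_bigo_const: "unif_bigo (\<lambda>_ _. c) (\<lambda>_. 1) S"
  by (rule unif_bigoI[where C="\<bar>c\<bar>"]) simp

lemma unif_bigo_continuous:
  assumes "compact S" "continuous_on S f"
  shows "unif_bigo (\<lambda>_. f) (\<lambda>_. 1) S"
proof -
  obtain M where "\<And>p. p \<in> S \<Longrightarrow> norm (f p) \<le> M"
    using compact_imp_bounded[OF compact_continuous_image[OF assms(2,1)]] by (auto simp: bounded_iff)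
  then show ?thesis by (intro unif_bigoI[where C=M]) simp
qed

lemma unif_bigo_add:
  assumes "unif_bigo f g S" "unif_bigo h g S"
  shows "unif_bigo (\<lambda>\<eta> p. f \<eta> p + h \<eta> p) g S"
proof -
  obtain C where C: "\<And>\<eta> p. 0 < \<eta> \<Longrightarrow> \<eta> \<le> 1 \<Longrightarrow> p \<in> S \<Longrightarrow> \<bar>f \<eta> p\<bar> \<le> C * g \<eta>"
    using assms(1) by (rule unif_bigoE) blast
  obtain D where D: "\<And>\<eta> p. 0 < \<eta> \<Longrightarrow> \<eta> \<le> 1 \<Longrightarrow> p \<in> S \<Longrightarrow> \<bar>h \<eta> p\<bar> \<le> D * g \<eta>"
    using assms(2) by (rule unif_bigoE) blast
  show ?thesis
  proof (rule unif_bigoI[where C="C + D"])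
    fix \<eta> :: real and p assume *: "0 < \<eta>" "\<eta> \<le> 1" "p \<in> S"
    show "\<bar>f \<eta> p + h \<eta> p\<bar> \<le> (C + D) * g \<eta>"
      using C[OF *] D[OF *] abs_triangle_ineq[of "f \<eta> p" "h \<eta> p"] unfolding distrib_right by linarith
  qed
qed

lemma unif_bigo_uminus: "unif_bigo f g S \<Longrightarrow> unif_bigo (\<lambda>\<eta> p. - f \<eta> p) g S"
  unfolding unif_bigo_def by simp

lemma unif_bigo_diff:
  "unif_bigo f g S \<Longrightarrow> unif_bigo h g S \<Longrightarrow> unif_bigo (\<lambda>\<eta> p. f \<eta> p - h \<eta> p) g S"
  using unif_bigo_add[OF _ unif_bigo_uminus, of f g S h] by simp

lemma unif_bigo_mult:
  assumes "unif_bigo f g S" "unif_bigo h (\<lambda>_. 1) S"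
  shows "unif_bigo (\<lambda>\<eta> p. f \<eta> p * h \<eta> p) g S"
proof -
  obtain C where C: "\<And>\<eta> p. 0 < \<eta> \<Longrightarrow> \<eta> \<le> 1 \<Longrightarrow> p \<in> S \<Longrightarrow> \<bar>f \<eta> p\<bar> \<le> C * g \<eta>"
    using assms(1) by (rule unif_bigoE) blast
  obtain M where M: "\<And>\<eta> p. 0 < \<eta> \<Longrightarrow> \<eta> \<le> 1 \<Longrightarrow> p \<in> S \<Longrightarrow> \<bar>h \<eta> p\<bar> \<le> M * 1"
    using assms(2) by (rule unif_bigoE) blast
  show ?thesis
  proof (rule unif_bigoI[where C="C * M"])
    fix \<eta> :: real and p assume *: "0 < \<eta>" "\<eta> \<le> 1" "p \<in> S"
    have "0 \<le> C * g \<eta>" using C[OF *] abs_ge_zero[of "f \<eta> p"] by linarith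
    then have "\<bar>f \<eta> p\<bar> * \<bar>h \<eta> p\<bar> \<le> C * g \<eta> * M"
      using C[OF *] M[OF *] by (intro mult_mono) simp_all
    then show "\<bar>f \<eta> p * h \<eta> p\<bar> \<le> C * M * g \<eta>" by (simp add: abs_mult mult_ac)
  qed
qed

lemma unif_bigo_mult_left:
  "unif_bigo h (\<lambda>_. 1) S \<Longrightarrow> unif_bigo f g S \<Longrightarrow> unif_bigo (\<lambda>\<eta> p. h \<eta> p * f \<eta> p) g S"
  using unif_bigo_mult[of f g S h] by (simp only: mult.commute)

lemma unif_bigo_cong:
  assumes "unif_bigo f g S" "\<And>\<eta> p. 0 < \<eta> \<Longrightarrow> \<eta> \<le> 1 \<Longrightarrow> p \<in> S \<Longrightarrow> f \<eta> p = f' \<eta> p"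
  shows "unif_bigo f' g S"
proof -
  obtain C where "\<And>\<eta> p. 0 < \<eta> \<Longrightarrow> \<eta> \<le> 1 \<Longrightarrow> p \<in> S \<Longrightarrow> \<bar>f \<eta> p\<bar> \<le> C * g \<eta>"
    using assms(1) by (rule unif_bigoE) blast
  with assms(2) show ?thesis by (intro unif_bigoI[where C=C]) simp
qed

lemma unif_bigo_eta_imp_1:
  assumes "unif_bigo f (\<lambda>\<eta>. \<eta>) S"
  shows "unif_bigo f (\<lambda>_. 1) S"
proof -
  obtain C where C: "\<And>\<eta> p. 0 < \<eta> \<Longrightarrow> \<eta> \<le> 1 \<Longrightarrow> p \<in> S \<Longrightarrow> \<bar>f \<eta> p\<bar> \<le> C * \<eta>"
    using assms by (rule unif_bigoE) blast
  have "C * \<eta> \<le> \<bar>C\<bar> * 1" if "0 < \<eta>" "\<eta> \<le> 1" for \<eta>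
    using that by (intro mult_mono) auto
  with C show ?thesis by (intro unif_bigoI[where C="\<bar>C\<bar>"]) (meson order_trans)
qed

lemma unif_bigo_mult_diff:
  assumes "unif_bigo (\<lambda>\<eta> p. f1 \<eta> p - g1 \<eta> p) g S" "unif_bigo (\<lambda>\<eta> p. f2 \<eta> p - g2 \<eta> p) g S"
    and "unif_bigo f2 (\<lambda>_. 1) S" "unif_bigo g1 (\<lambda>_. 1) S"
  shows "unif_bigo (\<lambda>\<eta> p. f1 \<eta> p * f2 \<eta> p - g1 \<eta> p * g2 \<eta> p) g S"
proof -
  have "unif_bigo (\<lambda>\<eta> p. (f1 \<eta> p - g1 \<eta> p) * f2 \<eta> p + g1 \<eta> p * (f2 \<eta> p - g2 \<eta> p)) g S"
    using assms by (intro unif_bigo_add unif_bigo_mult unif_bigo_mult_left)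
  then show ?thesis by (rule unif_bigo_cong) (simp add: algebra_simps)
qed

lemma unif_bigo_bounded_if_close:
  assumes "unif_bigo (\<lambda>\<eta> p. f \<eta> p - g \<eta> p) (\<lambda>\<eta>. \<eta>) S" "unif_bigo g (\<lambda>_. 1) S"
  shows "unif_bigo f (\<lambda>_. 1) S"
  using unif_bigo_add[OF unif_bigo_eta_imp_1[OF assms(1)] assms(2)] by simp

lemma unif_bigo_sqrt_taylor2:
  assumes p: "p > 0" and W: "unif_bigo W (\<lambda>_. 1) S" and T: "unif_bigo T (\<lambda>_. 1) S"
    and T_nonneg: "\<And>\<eta> q. 0 < \<eta> \<Longrightarrow> \<eta> \<le> 1 \<Longrightarrow> q \<in> S \<Longrightarrow> T \<eta> q \<ge> 0"
  shows "unif_bigo (\<lambda>\<eta> q. W \<eta> q / \<eta> * (sqrt (p^2 + \<eta> * T \<eta> q) - p - \<eta> * T \<eta> q / (2*p))) (\<lambda>\<eta>. \<eta>) S"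
proof -
  obtain M where M: "\<And>\<eta> q. 0 < \<eta> \<Longrightarrow> \<eta> \<le> 1 \<Longrightarrow> q \<in> S \<Longrightarrow> \<bar>W \<eta> q\<bar> \<le> M * 1"
    using W by (rule unif_bigoE) blast
  obtain N where N: "\<And>\<eta> q. 0 < \<eta> \<Longrightarrow> \<eta> \<le> 1 \<Longrightarrow> q \<in> S \<Longrightarrow> \<bar>T \<eta> q\<bar> \<le> N * 1"
    using T by (rule unif_bigoE) blast
  show ?thesis
  proof (rule unif_bigoI[where C="M * N^2 / (8 * p^3)"])
    fix \<eta> :: real and q assume \<eta>: "0 < \<eta>" "\<eta> \<le> 1" and q: "q \<in> S"
    have T0: "0 \<le> \<eta> * T \<eta> q" using T_nonneg[OF \<eta> q] \<eta> by simp
    have "(\<eta> * T \<eta> q)^2 \<le> (\<eta> * N)^2"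
      using N[OF \<eta> q] T0 \<eta> by (intro power_mono mult_left_mono) auto
    then have "\<bar>sqrt (p^2 + \<eta> * T \<eta> q) - p - \<eta> * T \<eta> q / (2*p)\<bar> \<le> (\<eta> * N)^2 / (8 * p^3)"
      using abs_sqrt_add_taylor2_le[OF p T0] p by (simp add: divide_right_mono order_trans)
    then have "\<bar>W \<eta> q\<bar> / \<eta> * \<bar>sqrt (p^2 + \<eta> * T \<eta> q) - p - \<eta> * T \<eta> q / (2*p)\<bar> \<le> M / \<eta> * ((\<eta> * N)^2 / (8 * p^3))"
      using M[OF \<eta> q] \<eta> by (intro mult_mono divide_right_mono) auto
    also have "\<dots> = M * N^2 / (8 * p^3) * \<eta>" using \<eta> by (simp add: power2_eq_square)
    finally show "\<bar>W \<eta> q / \<eta> * (sqrt (p^2 + \<eta> * T \<eta> q) - p - \<eta> * T \<eta> q / (2*p))\<bar> \<le> M * N^2 / (8 * p^3) * \<eta>"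
      using \<eta> by (simp add: abs_mult)
  qed
qed

lemma unif_bigo_inverse_sqrt_diff:
  assumes p: "p > 0" and T: "unif_bigo T (\<lambda>_. 1) S"
    and T_nonneg: "\<And>\<eta> q. 0 < \<eta> \<Longrightarrow> \<eta> \<le> 1 \<Longrightarrow> q \<in> S \<Longrightarrow> T \<eta> q \<ge> 0"
  shows "unif_bigo (\<lambda>\<eta> q. 1 / sqrt (p^2 + \<eta> * T \<eta> q) - 1 / p) (\<lambda>\<eta>. \<eta>) S"
proof -
  obtain N where N: "\<And>\<eta> q. 0 < \<eta> \<Longrightarrow> \<eta> \<le> 1 \<Longrightarrow> q \<in> S \<Longrightarrow> \<bar>T \<eta> q\<bar> \<le> N * 1"
    using T by (rule unif_bigoE) blast
  show ?thesis
  proof (rule unif_bigoI[where C="N / (2 * p^3)"])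
    fix \<eta> :: real and q assume \<eta>: "0 < \<eta>" "\<eta> \<le> 1" and q: "q \<in> S"
    have T0: "0 \<le> \<eta> * T \<eta> q" using T_nonneg[OF \<eta> q] \<eta> by simp
    have "\<bar>1 / sqrt (p^2 + \<eta> * T \<eta> q) - 1 / p\<bar> \<le> \<eta> * T \<eta> q / (2 * p^3)"
      by (rule abs_inverse_sqrt_add_diff_le[OF p T0])
    also have "\<dots> \<le> \<eta> * N / (2 * p^3)"
      using N[OF \<eta> q] \<eta> p by (intro divide_right_mono mult_left_mono) auto
    finally show "\<bar>1 / sqrt (p^2 + \<eta> * T \<eta> q) - 1 / p\<bar> \<le> N / (2 * p^3) * \<eta>" by (simp add: mult.commute)
  qed
qed

lemma unif_bigo_inverse_sqrt:
  assumes p: "p > 0" and T_nonneg: "\<And>\<eta> q. 0 < \<eta> \<Longrightarrow> \<eta> \<le> 1 \<Longrightarrow> q \<in> S \<Longrightarrow> T \<eta> q \<ge> 0"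
  shows "unif_bigo (\<lambda>\<eta> q. 1 / sqrt (p^2 + \<eta> * T \<eta> q)) (\<lambda>_. 1) S"
proof (rule unif_bigoI[where C="1 / p"])
  fix \<eta> :: real and q assume "0 < \<eta>" "\<eta> \<le> 1" "q \<in> S"
  then have "p \<le> sqrt (p^2 + \<eta> * T \<eta> q)" using sqrt_add_bounds(1)[OF p] T_nonneg by simp
  then show "\<bar>1 / sqrt (p^2 + \<eta> * T \<eta> q)\<bar> \<le> 1 / p * 1" using p by (simp add: frac_le)
qed

section \<open>Green function and conjugation symmetry\<close>

lemma Gamma3_mult_cnj:
  assumes "dist z x > 0" "dist y x > 0"
  shows "Gamma3 k z x * cnj (Gamma3 k' y x)
    = of_real (1 / (16 * pi^2)) * (of_real (1 / dist z x * (1 / dist y x)) * cis (k * dist z x - k' * dist y x))"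
  using assms unfolding Gamma3_def
  by (simp add: cis_cnj cis_mult cis_divide[symmetric] power2_eq_square field_simps flip: of_real_mult)

lemma psf_swap: "psf cs c l B y z = cnj (psf c cs l B z y)"
  unfolding psf_def by (simp add: HK_integral_cnj[symmetric] mult.commute)

lemma GG_uminus: "GG (- \<xi>1) (- \<xi>2) = cnj (GG \<xi>1 \<xi>2)"
  unfolding GG_def by (simp add: HK_integral_cnj[symmetric] cis_cnj)

lemma lead1_swap: "lead1 cs c l0 B \<eta> y z = cnj (lead2 c cs l0 B \<eta> z y)"
proof -
  have "phi cs c z = phi_inv c cs z" unfolding phi_def phi_inv_def ..
  then show ?thesis
    unfolding lead1_def lead2_def Let_def
    by (simp add: HK_integral_cnj[symmetric] cis_cnj GG_uminus[symmetric])
      (intro disjI2 integral_cong, simp add: algebra_simps diff_divide_distrib)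
qed

section \<open>The paraxial regime\<close>

locale paraxial_setting =
  fixes c cs l0 a b zpar ypar :: real and zp yp :: "real^2"
  assumes c_pos: "c > 0" and cs_pos: "cs > 0" and l0_pos: "l0 > 0"
    and a_nonneg: "0 \<le> a" and a_le_b: "a \<le> b"
    and zpar_pos: "zpar > 0" and ypar_pos: "ypar > 0"
begin

abbreviation band_square :: "(real \<times> (real^2)) set" where
  "band_square \<equiv> {a..b} \<times> sq2 1"

lemma unif_bigo_band_continuous:
  "continuous_on band_square f \<Longrightarrow> unif_bigo (\<lambda>_. f) (\<lambda>_. 1) band_square"
  by (rule unif_bigo_continuous) (auto simp: sq2_def intro: compact_Times)

definition probe_dist :: "real^2 \<Rightarrow> real \<Rightarrow> real \<Rightarrow> real^2 \<Rightarrow> real" where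
  "probe_dist v p \<eta> u = sqrt (p^2 + \<eta> * (norm (v - l0 *\<^sub>R u))^2)"

lemma dist_parax_probe:
  assumes "\<eta> > 0"
  shows "dist (parax \<eta> v p) ((sqrt \<eta> * l0) *\<^sub>R u, 0) = probe_dist v p \<eta> u"
proof -
  have "sqrt \<eta> *\<^sub>R v - (sqrt \<eta> * l0) *\<^sub>R u = sqrt \<eta> *\<^sub>R (v - l0 *\<^sub>R u)"
    by (simp add: scaleR_diff_right)
  then have "(dist (sqrt \<eta> *\<^sub>R v) ((sqrt \<eta> * l0) *\<^sub>R u))^2 = \<eta> * (norm (v - l0 *\<^sub>R u))^2"
    using assms by (simp add: dist_norm power_mult_distrib)
  then show ?thesis unfolding parax_def probe_dist_def dist_Pair_Pair by (simp add: add.commute)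
qed

lemma probe_dist_pos: "p > 0 \<Longrightarrow> \<eta> > 0 \<Longrightarrow> probe_dist v p \<eta> u > 0"
  unfolding probe_dist_def by (intro real_sqrt_gt_zero add_pos_nonneg) auto

definition exact_amp :: "real \<Rightarrow> real \<times> (real^2) \<Rightarrow> real" where
  "exact_amp \<eta> q = 1 / probe_dist zp zpar \<eta> (snd q) * (1 / probe_dist yp ypar \<eta> (snd q))"

definition exact_phase :: "real \<Rightarrow> real \<times> (real^2) \<Rightarrow> real" where
  "exact_phase \<eta> q = fst q / \<eta> * (probe_dist zp zpar \<eta> (snd q) / c - probe_dist yp ypar \<eta> (snd q) / cs)"

lemma probe_integral_parax_eq:
  assumes "\<eta> > 0"
  shows "integral (sq2 (sqrt \<eta> * l0))
      (\<lambda>x. Gamma3 (\<omega> / c) (parax \<eta> zp zpar) (x, 0) * cnj (Gamma3 (\<omega> / cs) (parax \<eta> yp ypar) (x, 0)))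
    = of_real (\<eta> * l0^2 / (16 * pi^2)) *
      integral (sq2 1) (\<lambda>u. of_real (exact_amp \<eta> (\<eta> * \<omega>, u)) * cis (exact_phase \<eta> (\<eta> * \<omega>, u)))"
proof -
  have m: "sqrt \<eta> * l0 > 0" using assms l0_pos by simp
  have "Gamma3 (\<omega> / c) (parax \<eta> zp zpar) ((sqrt \<eta> * l0) *\<^sub>R u, 0) * cnj (Gamma3 (\<omega> / cs) (parax \<eta> yp ypar) ((sqrt \<eta> * l0) *\<^sub>R u, 0))
      = of_real (1 / (16 * pi^2)) * (of_real (exact_amp \<eta> (\<eta> * \<omega>, u)) * cis (exact_phase \<eta> (\<eta> * \<omega>, u)))" for u
    using assms zpar_pos ypar_pos
    by (subst Gamma3_mult_cnj) (simp_all add: dist_parax_probe probe_dist_pos exact_amp_def exact_phase_def right_diff_distrib)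
  then show ?thesis
    using assms l0_pos by (simp add: integral_sq2_scaleR[OF m] scaleR_conv_of_real power_mult_distrib)
qed

lemma psf_parax_eq:
  assumes "\<eta> > 0"
  shows "psf c cs (sqrt \<eta> * l0) {a / \<eta>..b / \<eta>} (parax \<eta> zp zpar) (parax \<eta> yp ypar)
    = of_real (l0^4 / (\<eta> * (16 * pi^2)^2)) * amp_phase_integral a b (exact_amp \<eta>) (exact_phase \<eta>)"
proof -
  define C where "C = \<eta> * l0^2 / (16 * pi^2)"
  define J where "J w = integral (sq2 1) (\<lambda>u. of_real (exact_amp \<eta> (w, u)) * cis (exact_phase \<eta> (w, u)))" for w
  have "psf c cs (sqrt \<eta> * l0) {a / \<eta>..b / \<eta>} (parax \<eta> zp zpar) (parax \<eta> yp ypar)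
      = integral {a / \<eta>..b / \<eta>} (\<lambda>\<omega>. of_real (\<omega>^2) * (of_real C * J (\<eta> * \<omega>))^2)"
    unfolding psf_def probe_integral_parax_eq[OF assms] C_def J_def ..
  also have "\<dots> = of_real (1 / \<eta>) * integral {a..b} (\<lambda>w. of_real ((C / \<eta>)^2) * (of_real (w^2) * (J w)^2))"
    using assms by (simp add: integral_atLeastAtMost_divide scaleR_conv_of_real power_mult_distrib power_divide mult_ac)
  also have "\<dots> = of_real (l0^4 / (\<eta> * (16 * pi^2)^2)) * amp_phase_integral a b (exact_amp \<eta>) (exact_phase \<eta>)"
    using assms unfolding amp_phase_integral_def J_def integral_mult_right C_def
    by (simp add: field_simps power2_eq_square power4_eq_xxxx)
  finally show ?thesis .
qed

definition norm_z :: "real \<Rightarrow> real" where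
  "norm_z \<eta> = norm (parax \<eta> zp zpar)"

definition norm_phi_y :: "real \<Rightarrow> real" where
  "norm_phi_y \<eta> = norm (phi c cs (parax \<eta> yp ypar))"

lemma norm_z_eq: "\<eta> > 0 \<Longrightarrow> norm_z \<eta> = sqrt (zpar^2 + \<eta> * (norm zp)^2)"
  unfolding norm_z_def parax_def norm_Pair by (simp add: power_mult_distrib add.commute)

lemma norm_phi_y_eq: "\<eta> > 0 \<Longrightarrow> norm_phi_y \<eta> = sqrt ((c / cs * ypar)^2 + \<eta> * ((c / cs)^4 * (norm yp)^2))"
  unfolding norm_phi_y_def parax_def phi_def norm_Pair
  by (simp add: power_mult_distrib add.commute abs_mult power2_eq_square power4_eq_xxxx mult_ac)

lemma norm_z_pos: "\<eta> > 0 \<Longrightarrow> norm_z \<eta> > 0"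
  using zpar_pos by (simp add: norm_z_eq add_pos_nonneg)

lemma norm_phi_y_pos: "\<eta> > 0 \<Longrightarrow> norm_phi_y \<eta> > 0"
  using c_pos cs_pos ypar_pos by (simp add: norm_phi_y_eq add_pos_nonneg)

definition lead_amp :: "real \<Rightarrow> real \<times> (real^2) \<Rightarrow> real" where
  "lead_amp \<eta> q = 1 / norm_z \<eta> * (c / cs / norm_phi_y \<eta>)"

definition phase_coeff_z :: "real \<times> (real^2) \<Rightarrow> real" where
  "phase_coeff_z q = fst q * l0 / c * (l0 * (norm (snd q))^2 / 2 - snd q \<bullet> zp)"

definition phase_coeff_y :: "real \<times> (real^2) \<Rightarrow> real" where
  "phase_coeff_y q = fst q / c * (((c / cs)^4 - (c / cs)^2) * (norm yp)^2 / 2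
                              + (c / cs)^2 * l0 * (snd q \<bullet> yp - l0 * (norm (snd q))^2 / 2))"

text \<open>In lead1 the two phase factors in front of the squared \<open>GG\<close> are absorbed into \<open>GG\<close>
  with half their sum; \<open>phase_coeff_z\<close> and \<open>phase_coeff_y\<close> collect the terms multiplying
  \<open>1 / |z|\<close> and \<open>1 / |\<phi>(y)|\<close>.\<close>

definition lead_phase :: "real \<Rightarrow> real \<times> (real^2) \<Rightarrow> real" where
  "lead_phase \<eta> q = fst q / (\<eta> * c) * (norm_z \<eta> - norm_phi_y \<eta>) + phase_coeff_z q / norm_z \<eta> + phase_coeff_y q / norm_phi_y \<eta>"

lemma lead1_parax_eq:
  assumes "\<eta> > 0"
  shows "lead1 c cs l0 {a..b} \<eta> (parax \<eta> zp zpar) (parax \<eta> yp ypar)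
    = of_real (l0^4 / (\<eta> * (16 * pi^2)^2)) * amp_phase_integral a b (lead_amp \<eta>) (lead_phase \<eta>)"
proof -
  define nz where "nz = norm_z \<eta>"
  define np where "np = norm_phi_y \<eta>"
  have "nz > 0" "np > 0" unfolding nz_def np_def using norm_z_pos norm_phi_y_pos assms by auto
  have perp_z: "perp \<eta> (parax \<eta> zp zpar) = zp" and perp_y: "perp \<eta> (phi c cs (parax \<eta> yp ypar)) = (c / cs)^2 *\<^sub>R yp"
    unfolding perp_def parax_def phi_def using assms by simp_all
  have K: "inverse \<eta> * (c / cs)^2 * l0^4 / (16 * pi^2 * nz * np)^2 = l0^4 / (\<eta> * (16 * pi^2)^2) * (1 / nz * (c / cs / np))^2"
    by (simp add: field_simps)
  have phase: "lead_phase \<eta> (w, u) = (2 * w / (\<eta> * c) * (nz - np) + w / c * (1 - (cs / c)^2) * (norm ((c / cs)^2 *\<^sub>R yp))^2 / np) / 2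
      + (- (u \<bullet> ((w * l0 / c) *\<^sub>R ((1 / nz) *\<^sub>R zp - (1 / np) *\<^sub>R (c / cs)^2 *\<^sub>R yp)))
         + (norm u)^2 / 2 * (w * l0^2 / c * (1 / nz - (c / cs)^2 * (1 / np))))" for w u
    unfolding lead_phase_def phase_coeff_z_def phase_coeff_y_def nz_def[symmetric] np_def[symmetric]
    using \<open>nz > 0\<close> \<open>np > 0\<close> c_pos cs_pos
    by (simp add: inner_diff_right field_simps power2_eq_square power4_eq_xxxx)
  show ?thesis
    unfolding lead1_def Let_def norm_z_def[symmetric] norm_phi_y_def[symmetric] perp_z perp_y nz_def[symmetric] np_def[symmetric] K
    unfolding integral_GG_square_eq amp_phase_integral_def phase lead_amp_def nz_def[symmetric] np_def[symmetric]
    by simp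
qed

definition fresnel_phase :: "real \<Rightarrow> real \<times> (real^2) \<Rightarrow> real" where
  "fresnel_phase \<eta> q = fst q / \<eta> * (zpar / c - ypar / cs)
     + fst q * ((norm (zp - l0 *\<^sub>R snd q))^2 / (2 * c * zpar) - (norm (yp - l0 *\<^sub>R snd q))^2 / (2 * cs * ypar))"

lemma fresnel_phase_eq:
  assumes "\<eta> > 0"
  shows "fresnel_phase \<eta> q = fst q / (\<eta> * c) * (zpar - c / cs * ypar)
    + fst q / c * ((norm zp)^2 / (2 * zpar) - (c / cs)^4 * (norm yp)^2 / (2 * (c / cs * ypar)))
    + phase_coeff_z q / zpar + phase_coeff_y q / (c / cs * ypar)"
  using assms c_pos cs_pos zpar_pos ypar_pos
  unfolding fresnel_phase_def phase_coeff_z_def phase_coeff_y_def power2_norm_diff_scaleR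
  by (simp add: field_simps power2_eq_square power4_eq_xxxx)

lemma exact_phase_expansion:
  "unif_bigo (\<lambda>\<eta> q. exact_phase \<eta> q - fresnel_phase \<eta> q) (\<lambda>\<eta>. \<eta>) band_square"
proof -
  let ?Tz = "\<lambda>q. (norm (zp - l0 *\<^sub>R snd q))^2" and ?Ty = "\<lambda>q. (norm (yp - l0 *\<^sub>R snd q))^2"
  have "unif_bigo (\<lambda>\<eta> q. fst q / c / \<eta> * (sqrt (zpar^2 + \<eta> * ?Tz q) - zpar - \<eta> * ?Tz q / (2 * zpar))
      - fst q / cs / \<eta> * (sqrt (ypar^2 + \<eta> * ?Ty q) - ypar - \<eta> * ?Ty q / (2 * ypar))) (\<lambda>\<eta>. \<eta>) band_square"
    using zpar_pos ypar_pos c_pos cs_pos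
    by (intro unif_bigo_diff unif_bigo_sqrt_taylor2 unif_bigo_band_continuous continuous_intros) auto
  then show ?thesis
    by (rule unif_bigo_cong)
      (use c_pos cs_pos zpar_pos ypar_pos in \<open>simp add: exact_phase_def fresnel_phase_def probe_dist_def field_simps\<close>)
qed

lemma continuous_on_phase_coeff_z: "continuous_on band_square phase_coeff_z"
  unfolding phase_coeff_z_def[abs_def] using c_pos by (intro continuous_intros) auto

lemma continuous_on_phase_coeff_y: "continuous_on band_square phase_coeff_y"
  unfolding phase_coeff_y_def[abs_def] using c_pos by (intro continuous_intros) auto

lemma lead_phase_expansion:
  "unif_bigo (\<lambda>\<eta> q. lead_phase \<eta> q - fresnel_phase \<eta> q) (\<lambda>\<eta>. \<eta>) band_square"
proof -
  define k where "k = c / cs * ypar"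
  define Z where "Z = (norm zp)^2"
  define Y where "Y = (c / cs)^4 * (norm yp)^2"
  have "k > 0" "Z \<ge> 0" "Y \<ge> 0" unfolding k_def Z_def Y_def using c_pos cs_pos ypar_pos by auto
  have W: "unif_bigo (\<lambda>_ q. fst q / c) (\<lambda>_. 1) band_square"
    using c_pos by (intro unif_bigo_band_continuous continuous_intros) auto
  have taylor_z: "unif_bigo (\<lambda>\<eta> q. fst q / c / \<eta> * (sqrt (zpar^2 + \<eta> * Z) - zpar - \<eta> * Z / (2 * zpar))) (\<lambda>\<eta>. \<eta>) band_square"
    using unif_bigo_sqrt_taylor2[OF zpar_pos W unif_bigo_const[of Z]] \<open>Z \<ge> 0\<close> by simp
  have taylor_y: "unif_bigo (\<lambda>\<eta> q. fst q / c / \<eta> * (sqrt (k^2 + \<eta> * Y) - k - \<eta> * Y / (2 * k))) (\<lambda>\<eta>. \<eta>) band_square"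
    using unif_bigo_sqrt_taylor2[OF \<open>k > 0\<close> W unif_bigo_const[of Y]] \<open>Y \<ge> 0\<close> by simp
  have inverse_z: "unif_bigo (\<lambda>\<eta> q. phase_coeff_z q * (1 / sqrt (zpar^2 + \<eta> * Z) - 1 / zpar)) (\<lambda>\<eta>. \<eta>) band_square"
    using unif_bigo_inverse_sqrt_diff[OF zpar_pos unif_bigo_const[of Z]] \<open>Z \<ge> 0\<close>
    by (intro unif_bigo_mult_left unif_bigo_band_continuous continuous_on_phase_coeff_z) simp
  have inverse_y: "unif_bigo (\<lambda>\<eta> q. phase_coeff_y q * (1 / sqrt (k^2 + \<eta> * Y) - 1 / k)) (\<lambda>\<eta>. \<eta>) band_square"
    using unif_bigo_inverse_sqrt_diff[OF \<open>k > 0\<close> unif_bigo_const[of Y]] \<open>Y \<ge> 0\<close>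
    by (intro unif_bigo_mult_left unif_bigo_band_continuous continuous_on_phase_coeff_y) simp
  have "unif_bigo (\<lambda>\<eta> q. fst q / c / \<eta> * (sqrt (zpar^2 + \<eta> * Z) - zpar - \<eta> * Z / (2 * zpar))
      - fst q / c / \<eta> * (sqrt (k^2 + \<eta> * Y) - k - \<eta> * Y / (2 * k))
      + phase_coeff_z q * (1 / sqrt (zpar^2 + \<eta> * Z) - 1 / zpar) + phase_coeff_y q * (1 / sqrt (k^2 + \<eta> * Y) - 1 / k))
      (\<lambda>\<eta>. \<eta>) band_square"
    by (intro unif_bigo_add unif_bigo_diff taylor_z taylor_y inverse_z inverse_y)
  then show ?thesis
  proof (rule unif_bigo_cong)
    fix \<eta> :: real and q assume "0 < \<eta>"
    then show "fst q / c / \<eta> * (sqrt (zpar^2 + \<eta> * Z) - zpar - \<eta> * Z / (2 * zpar))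
      - fst q / c / \<eta> * (sqrt (k^2 + \<eta> * Y) - k - \<eta> * Y / (2 * k))
      + phase_coeff_z q * (1 / sqrt (zpar^2 + \<eta> * Z) - 1 / zpar) + phase_coeff_y q * (1 / sqrt (k^2 + \<eta> * Y) - 1 / k)
      = lead_phase \<eta> q - fresnel_phase \<eta> q"
      using c_pos zpar_pos \<open>k > 0\<close> norm_z_pos[of \<eta>] norm_phi_y_pos[of \<eta>]
      unfolding lead_phase_def fresnel_phase_eq[OF \<open>0 < \<eta>\<close>] norm_z_eq[OF \<open>0 < \<eta>\<close>] norm_phi_y_eq[OF \<open>0 < \<eta>\<close>]
        k_def[symmetric] Z_def[symmetric] Y_def[symmetric]
      by (simp add: field_simps)
  qed
qed

lemma exact_amp_expansion:
  "unif_bigo (\<lambda>\<eta> q. exact_amp \<eta> q - 1 / zpar * (1 / ypar)) (\<lambda>\<eta>. \<eta>) band_square"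
proof -
  let ?Tz = "\<lambda>q. (norm (zp - l0 *\<^sub>R snd q))^2" and ?Ty = "\<lambda>q. (norm (yp - l0 *\<^sub>R snd q))^2"
  have T: "unif_bigo (\<lambda>_. ?Tz) (\<lambda>_. 1) band_square" "unif_bigo (\<lambda>_. ?Ty) (\<lambda>_. 1) band_square"
    by (intro unif_bigo_band_continuous continuous_intros)+
  have "unif_bigo (\<lambda>\<eta> q. 1 / sqrt (zpar^2 + \<eta> * ?Tz q) * (1 / sqrt (ypar^2 + \<eta> * ?Ty q)) - 1 / zpar * (1 / ypar))
      (\<lambda>\<eta>. \<eta>) band_square"
    using zpar_pos ypar_pos
    by (intro unif_bigo_mult_diff unif_bigo_inverse_sqrt_diff unif_bigo_inverse_sqrt unif_bigo_const T) auto
  then show ?thesis by (rule unif_bigo_cong) (simp add: exact_amp_def probe_dist_def)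
qed

lemma lead_amp_expansion:
  "unif_bigo (\<lambda>\<eta> q. lead_amp \<eta> q - 1 / zpar * (1 / ypar)) (\<lambda>\<eta>. \<eta>) band_square"
proof -
  define k where "k = c / cs * ypar"
  define Z where "Z = (norm zp)^2"
  define Y where "Y = (c / cs)^4 * (norm yp)^2"
  have "k > 0" "Z \<ge> 0" "Y \<ge> 0" unfolding k_def Z_def Y_def using c_pos cs_pos ypar_pos by auto
  have "unif_bigo (\<lambda>\<eta> q. c / cs * (1 / sqrt (k^2 + \<eta> * Y) - 1 / k)) (\<lambda>\<eta>. \<eta>) band_square"
    using unif_bigo_inverse_sqrt_diff[OF \<open>k > 0\<close> unif_bigo_const[of Y]] \<open>Y \<ge> 0\<close>
    by (intro unif_bigo_mult_left unif_bigo_const) simp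
  then have diff_y: "unif_bigo (\<lambda>\<eta> q. c / cs * (1 / sqrt (k^2 + \<eta> * Y)) - c / cs * (1 / k)) (\<lambda>\<eta>. \<eta>) band_square"
    by (rule unif_bigo_cong) (simp add: right_diff_distrib)
  have bounded_y: "unif_bigo (\<lambda>\<eta> q. c / cs * (1 / sqrt (k^2 + \<eta> * Y))) (\<lambda>_. 1) band_square"
    using unif_bigo_inverse_sqrt[OF \<open>k > 0\<close>, where T="\<lambda>_ _. Y" and S=band_square] \<open>Y \<ge> 0\<close>
    by (intro unif_bigo_mult_left unif_bigo_const) simp
  have diff_z: "unif_bigo (\<lambda>\<eta> q. 1 / sqrt (zpar^2 + \<eta> * Z) - 1 / zpar) (\<lambda>\<eta>. \<eta>) band_square"
    using unif_bigo_inverse_sqrt_diff[OF zpar_pos unif_bigo_const[of Z]] \<open>Z \<ge> 0\<close> by simp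
  have "unif_bigo (\<lambda>\<eta> q. 1 / sqrt (zpar^2 + \<eta> * Z) * (c / cs * (1 / sqrt (k^2 + \<eta> * Y)))
      - 1 / zpar * (c / cs * (1 / k))) (\<lambda>\<eta>. \<eta>) band_square"
    by (rule unif_bigo_mult_diff[OF diff_z diff_y bounded_y unif_bigo_const])
  then show ?thesis
    by (rule unif_bigo_cong)
      (use c_pos cs_pos in \<open>simp add: lead_amp_def norm_z_eq norm_phi_y_eq k_def Z_def Y_def\<close>)
qed

lemma continuous_on_probe_dist: "continuous_on band_square (\<lambda>q. probe_dist v p \<eta> (snd q))"
  unfolding probe_dist_def by (intro continuous_intros)

lemma continuous_on_amps_phases:
  assumes "\<eta> > 0"
  shows "continuous_on band_square (exact_amp \<eta>)" "continuous_on band_square (exact_phase \<eta>)"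
    "continuous_on band_square (lead_amp \<eta>)" "continuous_on band_square (lead_phase \<eta>)"
proof -
  have "probe_dist v p \<eta> u \<noteq> 0" if "p > 0" for v p u using probe_dist_pos[OF that assms, of v u] by linarith
  then show "continuous_on band_square (exact_amp \<eta>)" "continuous_on band_square (exact_phase \<eta>)"
    unfolding exact_amp_def[abs_def] exact_phase_def[abs_def] using zpar_pos ypar_pos c_pos cs_pos assms
    by (auto intro!: continuous_intros continuous_on_probe_dist)
  show "continuous_on band_square (lead_amp \<eta>)" unfolding lead_amp_def[abs_def] by simp
  show "continuous_on band_square (lead_phase \<eta>)"
    unfolding lead_phase_def[abs_def] using norm_z_pos[OF assms] norm_phi_y_pos[OF assms] assms c_pos
    by (intro continuous_intros continuous_on_phase_coeff_z continuous_on_phase_coeff_y) auto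
qed

lemma amp_phase_uniform_bounds:
  obtains \<delta> M where "\<And>\<eta> q. 0 < \<eta> \<Longrightarrow> \<eta> \<le> 1 \<Longrightarrow> q \<in> band_square \<Longrightarrow>
    \<bar>exact_amp \<eta> q - lead_amp \<eta> q\<bar> \<le> \<delta> * \<eta> \<and> \<bar>exact_phase \<eta> q - lead_phase \<eta> q\<bar> \<le> \<delta> * \<eta>
    \<and> \<bar>exact_amp \<eta> q\<bar> \<le> M \<and> \<bar>lead_amp \<eta> q\<bar> \<le> M"
proof -
  have "unif_bigo (\<lambda>\<eta> q. exact_amp \<eta> q - lead_amp \<eta> q) (\<lambda>\<eta>. \<eta>) band_square"
    using unif_bigo_diff[OF exact_amp_expansion lead_amp_expansion] by simp
  then obtain CA where CA: "\<And>\<eta> q. 0 < \<eta> \<Longrightarrow> \<eta> \<le> 1 \<Longrightarrow> q \<in> band_square \<Longrightarrow>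
      \<bar>exact_amp \<eta> q - lead_amp \<eta> q\<bar> \<le> CA * \<eta>"
    by (rule unif_bigoE) blast
  have "unif_bigo (\<lambda>\<eta> q. exact_phase \<eta> q - lead_phase \<eta> q) (\<lambda>\<eta>. \<eta>) band_square"
    using unif_bigo_diff[OF exact_phase_expansion lead_phase_expansion] by simp
  then obtain C\<Theta> where C\<Theta>: "\<And>\<eta> q. 0 < \<eta> \<Longrightarrow> \<eta> \<le> 1 \<Longrightarrow> q \<in> band_square \<Longrightarrow>
      \<bar>exact_phase \<eta> q - lead_phase \<eta> q\<bar> \<le> C\<Theta> * \<eta>"
    by (rule unif_bigoE) blast
  obtain M1 where M1: "\<And>\<eta> q. 0 < \<eta> \<Longrightarrow> \<eta> \<le> 1 \<Longrightarrow> q \<in> band_square \<Longrightarrow> \<bar>exact_amp \<eta> q\<bar> \<le> M1 * 1"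
    using unif_bigo_bounded_if_close[OF exact_amp_expansion unif_bigo_const] by (rule unif_bigoE) blast
  obtain M2 where M2: "\<And>\<eta> q. 0 < \<eta> \<Longrightarrow> \<eta> \<le> 1 \<Longrightarrow> q \<in> band_square \<Longrightarrow> \<bar>lead_amp \<eta> q\<bar> \<le> M2 * 1"
    using unif_bigo_bounded_if_close[OF lead_amp_expansion unif_bigo_const] by (rule unif_bigoE) blast
  show ?thesis
  proof (rule that[of "\<bar>CA\<bar> + \<bar>C\<Theta>\<bar>" "\<bar>M1\<bar> + \<bar>M2\<bar>"])
    fix \<eta> :: real and q assume \<eta>: "0 < \<eta>" "\<eta> \<le> 1" and q: "q \<in> band_square"
    have "CA * \<eta> \<le> (\<bar>CA\<bar> + \<bar>C\<Theta>\<bar>) * \<eta>" "C\<Theta> * \<eta> \<le> (\<bar>CA\<bar> + \<bar>C\<Theta>\<bar>) * \<eta>"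
      using \<eta> by (simp_all add: mult_right_mono)
    then show "\<bar>exact_amp \<eta> q - lead_amp \<eta> q\<bar> \<le> (\<bar>CA\<bar> + \<bar>C\<Theta>\<bar>) * \<eta>
        \<and> \<bar>exact_phase \<eta> q - lead_phase \<eta> q\<bar> \<le> (\<bar>CA\<bar> + \<bar>C\<Theta>\<bar>) * \<eta>
        \<and> \<bar>exact_amp \<eta> q\<bar> \<le> \<bar>M1\<bar> + \<bar>M2\<bar> \<and> \<bar>lead_amp \<eta> q\<bar> \<le> \<bar>M1\<bar> + \<bar>M2\<bar>"
      using CA[OF \<eta> q] C\<Theta>[OF \<eta> q] M1[OF \<eta> q] M2[OF \<eta> q] by linarith
  qed
qed

lemma psf_minus_lead1_bigo:
  "(\<lambda>\<eta>. psf c cs (sqrt \<eta> * l0) {a / \<eta> .. b / \<eta>} (parax \<eta> zp zpar) (parax \<eta> yp ypar)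
        - lead1 c cs l0 {a .. b} \<eta> (parax \<eta> zp zpar) (parax \<eta> yp ypar)) \<in> O[at_right 0](\<lambda>_. 1)"
proof -
  obtain \<delta> M where bounds: "\<And>\<eta> q. 0 < \<eta> \<Longrightarrow> \<eta> \<le> 1 \<Longrightarrow> q \<in> band_square \<Longrightarrow>
    \<bar>exact_amp \<eta> q - lead_amp \<eta> q\<bar> \<le> \<delta> * \<eta> \<and> \<bar>exact_phase \<eta> q - lead_phase \<eta> q\<bar> \<le> \<delta> * \<eta>
    \<and> \<bar>exact_amp \<eta> q\<bar> \<le> M \<and> \<bar>lead_amp \<eta> q\<bar> \<le> M"
    by (rule amp_phase_uniform_bounds) blast
  define K0 where "K0 = b^2 * (4 * (\<delta> + M * \<delta>) * (8 * M)) * (b - a)"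
  define K where "K = l0^4 / (16 * pi^2)^2 * K0"
  have "norm (psf c cs (sqrt \<eta> * l0) {a / \<eta> .. b / \<eta>} (parax \<eta> zp zpar) (parax \<eta> yp ypar)
        - lead1 c cs l0 {a .. b} \<eta> (parax \<eta> zp zpar) (parax \<eta> yp ypar)) \<le> K"
    if \<eta>: "0 < \<eta>" "\<eta> \<le> 1" for \<eta>
  proof -
    have "norm (amp_phase_integral a b (exact_amp \<eta>) (exact_phase \<eta>)
          - amp_phase_integral a b (lead_amp \<eta>) (lead_phase \<eta>))
        \<le> b^2 * (4 * (\<delta> * \<eta> + M * (\<delta> * \<eta>)) * (8 * M)) * (b - a)"
      by (rule norm_amp_phase_integral_diff_le[OF a_nonneg a_le_b continuous_on_amps_phases[OF \<eta>(1)]])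
        (rule bounds[OF \<eta>])
    also have "\<dots> = \<eta> * K0" unfolding K0_def by (simp add: algebra_simps)
    finally have "l0^4 / (\<eta> * (16 * pi^2)^2) * norm (amp_phase_integral a b (exact_amp \<eta>) (exact_phase \<eta>)
        - amp_phase_integral a b (lead_amp \<eta>) (lead_phase \<eta>)) \<le> l0^4 / (\<eta> * (16 * pi^2)^2) * (\<eta> * K0)"
      by (rule mult_left_mono) (use \<eta> in simp)
    also have "\<dots> = K" unfolding K_def using \<eta> by simp
    moreover have "norm (of_real (l0^4 / (\<eta> * (16 * pi^2)^2)) :: complex) = l0^4 / (\<eta> * (16 * pi^2)^2)"
      unfolding norm_of_real using \<eta> by (intro abs_of_nonneg) simp
    ultimately show ?thesis
      unfolding psf_parax_eq[OF \<eta>(1)] lead1_parax_eq[OF \<eta>(1)] right_diff_distrib[symmetric] norm_mult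
      by simp
  qed
  then show ?thesis
    by (intro bigoI[where c=K] eventually_mono[OF eventually_at_right_real[of 0 1]]) auto
qed

end

theorem mainTheorem1:
  fixes c cs l0 wmin wmax zpar ypar :: real and zp yp :: "real^2"
  assumes "c > 0" and "cs > 0" and "l0 > 0"
    and "0 < wmin" and "wmin < wmax"
    and "ypar > 0" and "zpar > 0"
  shows "(\<lambda>\<eta>. psf c cs (sqrt \<eta> * l0) {wmin / \<eta> .. wmax / \<eta>} (parax \<eta> zp zpar) (parax \<eta> yp ypar)
              - lead1 c cs l0 {wmin .. wmax} \<eta> (parax \<eta> zp zpar) (parax \<eta> yp ypar))
           \<in> O[at_right 0](\<lambda>_. 1)
    \<and> (\<lambda>\<eta>. psf c cs (sqrt \<eta> * l0) {wmin / \<eta> .. wmax / \<eta>} (parax \<eta> zp zpar) (parax \<eta> yp ypar)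
              - lead2 c cs l0 {wmin .. wmax} \<eta> (parax \<eta> zp zpar) (parax \<eta> yp ypar))
           \<in> O[at_right 0](\<lambda>_. 1)"
proof
  have setting: "paraxial_setting c cs l0 wmin wmax zpar ypar"
    and swapped: "paraxial_setting cs c l0 wmin wmax ypar zpar"
    using assms by (simp_all add: paraxial_setting_def)
  show "(\<lambda>\<eta>. psf c cs (sqrt \<eta> * l0) {wmin / \<eta> .. wmax / \<eta>} (parax \<eta> zp zpar) (parax \<eta> yp ypar)
      - lead1 c cs l0 {wmin .. wmax} \<eta> (parax \<eta> zp zpar) (parax \<eta> yp ypar)) \<in> O[at_right 0](\<lambda>_. 1)"
    by (rule paraxial_setting.psf_minus_lead1_bigo[OF setting])
  have swap: "psf c cs l B z y - lead2 c cs l0 B' \<eta> z y = cnj (psf cs c l B y z - lead1 cs c l0 B' \<eta> y z)"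
    for l B B' \<eta> z y
    unfolding complex_cnj_diff psf_swap[of c cs l B z y] lead1_swap[of cs c l0 B' \<eta> y z] by simp
  show "(\<lambda>\<eta>. psf c cs (sqrt \<eta> * l0) {wmin / \<eta> .. wmax / \<eta>} (parax \<eta> zp zpar) (parax \<eta> yp ypar)
      - lead2 c cs l0 {wmin .. wmax} \<eta> (parax \<eta> zp zpar) (parax \<eta> yp ypar)) \<in> O[at_right 0](\<lambda>_. 1)"
    unfolding swap bigo_cnj_iff by (rule paraxial_setting.psf_minus_lead1_bigo[OF swapped])
qed

end
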